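(* Let $A_n$ be the set of binary words of length $n$ that contain no $3$-antipower as a factor, and let $k \geq 6$. Then \begin{itemize} \item $A_{3k} = \mathcal{C}_{3k}\left(0^* \cup (01)^* \cup (01)^* 0 \cup 0^*10^* \cup 0^*011 \cup 0^*101\right)$, \item $A_{3k+1} = \mathcal{C}_{3k+1}\left(0^* \cup (01)^* \cup (01)^* 0 \cup 0^*10^* \cup 0^*011 \cup 0^*101 \cup 10^*1\right)$, \item $A_{3k+2} = \mathcal{C}_{3k+2}\left(0^* \cup (01)^* \cup (01)^* 0 \cup 0^*10^* \cup 0^*011 \cup 0^*101 \cup 10^*1 \cup 10^*10 \cup 10^*11\right)$. \end{itemize} In particular, for $k \geq 6$ there are exactly $6k+12$ (resp. $6k+16$, $6k+26$) binary words of length $3k$ (resp. $3k+1$, $3k+2$) avoiding $3$-antipowers.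
   Context: Words are over $\{0,1\}$. A $3$-antipower is a word $u_1u_2u_3$ with $|u_1|=|u_2|=|u_3|$ and $u_1,u_2,u_3$ pairwise distinct; a factor is a contiguous subword; a word avoids $3$-antipowers if it has no $3$-antipower as a factor. For a word $w$, $w^* = \{\varepsilon, w, w^2, \dots\}$, and sets of words are written as regular expressions. For a language $L \subseteq \{0,1\}^*$, $\mathcal{C}_n(L)$ denotes the closure of $L \cap \{0,1\}^n$ under bitwise complementation (exchanging $0$ and $1$) and reversal; i.e., it consists of all length-$n$ words of $L$, their bitwise complements, their reversals, and the bitwise complements of their reversals. *)

theory Defs
  imports Main "HOL-Library.Sublist"
begin

text \<open>Binary words over {0,1} are represented as bool lists, with False = 0 and True = 1.\<close>

definition antipower3 :: "bool list \<Rightarrow> bool" where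
  "antipower3 w \<longleftrightarrow> (\<exists>u1 u2 u3. w = u1 @ u2 @ u3 \<and>
      length u1 = length u2 \<and> length u2 = length u3 \<and>
      u1 \<noteq> u2 \<and> u1 \<noteq> u3 \<and> u2 \<noteq> u3)"

text \<open>A factor is a contiguous subword: the library predicate sublist.\<close>
definition avoids_antipower3 :: "bool list \<Rightarrow> bool" where
  "avoids_antipower3 w \<longleftrightarrow> \<not> (\<exists>v. sublist v w \<and> antipower3 v)"

definition A :: "nat \<Rightarrow> bool list set" where
  "A n = {w. length w = n \<and> avoids_antipower3 w}"

definition complement :: "bool list \<Rightarrow> bool list" where
  "complement w = map Not w"

definition Cl :: "nat \<Rightarrow> bool list set \<Rightarrow> bool list set" where
  "Cl n L = (let S = {w \<in> L. length w = n} in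
      S \<union> complement ` S \<union> rev ` S \<union> (complement \<circ> rev) ` S)"

definition pow :: "bool list \<Rightarrow> nat \<Rightarrow> bool list" where
  "pow w m = concat (replicate m w)"

abbreviation (input) b0 where "b0 \<equiv> False"
abbreviation (input) b1 where "b1 \<equiv> True"

definition "L_0s = {pow [b0] m | m. True}"
definition "L_01s = {pow [b0,b1] m | m. True}"
definition "L_01s0 = {pow [b0,b1] m @ [b0] | m. True}"
definition "L_0s10s = {pow [b0] i @ [b1] @ pow [b0] j | i j. True}"
definition "L_0s011 = {pow [b0] i @ [b0,b1,b1] | i. True}"
definition "L_0s101 = {pow [b0] i @ [b1,b0,b1] | i. True}"
definition "L_10s1 = {[b1] @ pow [b0] i @ [b1] | i. True}"
definition "L_10s10 = {[b1] @ pow [b0] i @ [b1,b0] | i. True}"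
definition "L_10s11 = {[b1] @ pow [b0] i @ [b1,b1] | i. True}"

definition "Lang0 = L_0s \<union> L_01s \<union> L_01s0 \<union> L_0s10s \<union> L_0s011 \<union> L_0s101"
definition "Lang1 = Lang0 \<union> L_10s1"
definition "Lang2 = Lang1 \<union> L_10s10 \<union> L_10s11"

end

theory Submission
  imports Defs
begin

(* For n >= 12 the antipower-free words of length n are the two alternating words, the words
   whose 1s sit at one of the "sparse supports" of sparse_supports (no 1 at all, a single 1
   anywhere, or two or three 1s next to the ends of the word), and the complements of the latter.
   This is proved by induction on n, starting from n = 12, where A 12 is computed by evaluation.
   A word of length n + 1 avoids 3-antipowers iff its prefix and suffix of length n do and it is
   not itself an antipower.  Prefix and suffix differ by at most one in their number of 1s, so
   they lie in the same one of the three families; alternating words extend only to alternating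
   words, and for sparse words the support of the extension is determined by the support of the
   prefix and the last letter.  A case analysis on the supports, with n symbolic, shows that the
   possible extensions are exactly the sparse supports of length n + 1, except for a few
   candidates when 3 divides n + 1, which are antipowers.  The closure of each language under
   complement and reversal consists of the same words, and counting them gives the cardinalities. *)

section \<open>Antipowers\<close>

lemma antipower3_iff_blocks:
  "antipower3 w \<longleftrightarrow>
     (\<exists>l. length w = 3 * l \<and> distinct [take l w, take l (drop l w), drop (2 * l) w])"
proof
  assume "antipower3 w"
  then obtain u1 u2 u3 where w: "w = u1 @ u2 @ u3" "length u1 = length u2" "length u2 = length u3"
    and "distinct [u1, u2, u3]" unfolding antipower3_def by auto
  then show "\<exists>l. length w = 3 * l \<and> distinct [take l w, take l (drop l w), drop (2 * l) w]"
    by (intro exI[of _ "length u1"]) simp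
next
  assume "\<exists>l. length w = 3 * l \<and> distinct [take l w, take l (drop l w), drop (2 * l) w]"
  then obtain l where l: "length w = 3 * l"
    and blocks: "distinct [take l w, take l (drop l w), drop (2 * l) w]" by blast
  have "w = take l w @ take l (drop l w) @ drop (2 * l) w"
    by (metis append_take_drop_id drop_drop mult_2 add.commute)
  with l blocks show "antipower3 w" unfolding antipower3_def
    by (intro exI[of _ "take l w"] exI[of _ "take l (drop l w)"] exI[of _ "drop (2 * l) w"]) auto
qed

lemma antipower3_code [code]:
  "antipower3 w \<longleftrightarrow>
     (let l = length w div 3 in
        length w = 3 * l \<and> distinct [take l w, take l (drop l w), drop (2 * l) w])"
proof -
  have "(\<exists>l. n = 3 * l \<and> P l) \<longleftrightarrow> (let l = n div 3 in n = 3 * l \<and> P l)" for n :: nat and P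
    by (auto simp: Let_def)
  then show ?thesis unfolding antipower3_iff_blocks .
qed

lemma antipower3_map_Not: "antipower3 (map Not w) \<longleftrightarrow> antipower3 w"
proof -
  have "inj Not" by (rule injI) simp
  then show ?thesis
    by (simp add: antipower3_iff_blocks take_map drop_map)
qed

lemma antipower3_iff_nth:
  "antipower3 w \<longleftrightarrow> (\<exists>l. length w = 3 * l \<and> (\<exists>i<l. w ! i \<noteq> w ! (l + i))
     \<and> (\<exists>i<l. w ! i \<noteq> w ! (2 * l + i)) \<and> (\<exists>i<l. w ! (l + i) \<noteq> w ! (2 * l + i)))"
  unfolding antipower3_iff_blocks
proof (rule ex_cong)
  fix l assume "length w = 3 * l"
  then show "distinct [take l w, take l (drop l w), drop (2 * l) w] \<longleftrightarrow>
      (\<exists>i<l. w ! i \<noteq> w ! (l + i)) \<and> (\<exists>i<l. w ! i \<noteq> w ! (2 * l + i))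
      \<and> (\<exists>i<l. w ! (l + i) \<noteq> w ! (2 * l + i))"
    by (simp add: list_eq_iff_nth_eq)
qed

lemma antipower3I:
  assumes "length w = 3 * l" "i < l" "w ! i" "\<not> w ! (l + i)" "\<not> w ! (2 * l + i)"
    "j < l" "\<not> w ! (l + j)" "w ! (2 * l + j)"
  shows "antipower3 w"
  unfolding antipower3_iff_nth using assms by blast

lemma antipower3_blocks_not_all_False:
  assumes "antipower3 w" "length w = 3 * l"
  shows "\<exists>i<2 * l. w ! i" "\<exists>i<3 * l. (i < l \<or> 2 * l \<le> i) \<and> w ! i" "\<exists>i<3 * l. l \<le> i \<and> w ! i"
proof -
  have one_of: "\<exists>x. Q x \<and> w ! x" if "w ! a \<noteq> w ! b" "Q a" "Q b" for a b Q
    using that by (cases "w ! a") auto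
  from assms(1) obtain l' i j k where "length w = 3 * l'" "i < l'" "w ! i \<noteq> w ! (l' + i)"
    "j < l'" "w ! j \<noteq> w ! (2 * l' + j)" "k < l'" "w ! (l' + k) \<noteq> w ! (2 * l' + k)"
    unfolding antipower3_iff_nth by blast
  moreover from this(1) assms(2) have "l' = l" by simp
  ultimately show "\<exists>i<2 * l. w ! i" "\<exists>i<3 * l. (i < l \<or> 2 * l \<le> i) \<and> w ! i"
    "\<exists>i<3 * l. l \<le> i \<and> w ! i"
    using one_of[of i "l + i" "\<lambda>x. x < 2 * l"]
      one_of[of j "2 * l + j" "\<lambda>x. x < 3 * l \<and> (x < l \<or> 2 * l \<le> x)"]
      one_of[of "l + k" "2 * l + k" "\<lambda>x. x < 3 * l \<and> l \<le> x"]
    by auto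
qed

section \<open>Extending antipower-free words\<close>

lemma sublist_butlast_or_tl:
  assumes "sublist u v"
  shows "u = v \<or> sublist u (butlast v) \<or> sublist u (tl v)"
proof -
  from assms obtain p s where v: "v = p @ u @ s" unfolding sublist_def by blast
  show ?thesis
  proof (cases "s = []")
    case False
    then have "butlast v = p @ u @ butlast s" unfolding v by (simp add: butlast_append)
    then show ?thesis unfolding sublist_def by blast
  next
    case True
    show ?thesis
    proof (cases p)
      case (Cons a p')
      then have "tl v = p' @ u @ s" unfolding v by simp
      then show ?thesis unfolding sublist_def by blast
    qed (use True v in simp)
  qed
qed

lemma A_Suc_iff:
  "v \<in> A (Suc n) \<longleftrightarrow> length v = Suc n \<and> butlast v \<in> A n \<and> tl v \<in> A n \<and> \<not> antipower3 v"
proof -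
  have "avoids_antipower3 v \<longleftrightarrow>
      avoids_antipower3 (butlast v) \<and> avoids_antipower3 (tl v) \<and> \<not> antipower3 v"
    unfolding avoids_antipower3_def
    by (metis sublist_order.order_trans sublist_order.order_refl sublist_butlast sublist_tl
        sublist_butlast_or_tl)
  then show ?thesis by (auto simp: A_def)
qed

definition extend_avoiding :: "bool list list \<Rightarrow> bool list list" where
  "extend_avoiding L =
     filter (\<lambda>v. \<forall>s\<in>set (suffixes v). \<not> antipower3 s)
       (concat (map (\<lambda>x. [x @ [False], x @ [True]]) L))"

lemma avoids_antipower3_snoc:
  "avoids_antipower3 (x @ [c]) \<longleftrightarrow>
     avoids_antipower3 x \<and> (\<forall>s\<in>set (suffixes (x @ [c])). \<not> antipower3 s)"
  unfolding avoids_antipower3_def Ball_def in_set_suffixes sublist_snoc by blast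

lemma A_Suc_eq_extend_avoiding:
  assumes "A n = set L"
  shows "A (Suc n) = set (extend_avoiding L)"
proof (intro set_eqI)
  fix v
  show "v \<in> A (Suc n) \<longleftrightarrow> v \<in> set (extend_avoiding L)"
  proof (cases v rule: rev_exhaust)
    case (snoc x c)
    then show ?thesis using assms
      by (cases c) (auto simp: A_def extend_avoiding_def avoids_antipower3_snoc)
  qed (simp add: A_def extend_avoiding_def)
qed

lemma A_eq_extend_avoiding_power: "A n = set ((extend_avoiding ^^ n) [[]])"
proof (induction n)
  case 0
  have "avoids_antipower3 []" by (simp add: avoids_antipower3_def antipower3_def)
  then show ?case by (auto simp: A_def)
next
  case (Suc n)
  then show ?case by (simp add: A_Suc_eq_extend_avoiding)
qed

section \<open>Indicator words and alternating words\<close>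

definition indicator_word :: "nat \<Rightarrow> nat list \<Rightarrow> bool list" where
  "indicator_word n P = map (\<lambda>i. i \<in> set P) [0..<n]"

definition alternating_word :: "nat \<Rightarrow> bool \<Rightarrow> bool list" where
  "alternating_word n b = map (\<lambda>i. if even i then b else \<not> b) [0..<n]"

lemma length_indicator_word [simp]: "length (indicator_word n P) = n"
  by (simp add: indicator_word_def)

lemma nth_indicator_word [simp]: "i < n \<Longrightarrow> indicator_word n P ! i \<longleftrightarrow> i \<in> set P"
  by (simp add: indicator_word_def)

lemma indicator_word_eqI:
  "length w = n \<Longrightarrow> (\<And>i. i < n \<Longrightarrow> w ! i \<longleftrightarrow> i \<in> set P) \<Longrightarrow> w = indicator_word n P"
  by (rule nth_equalityI) simp_all

lemma length_alternating_word [simp]: "length (alternating_word n b) = n"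
  by (simp add: alternating_word_def)

lemma nth_alternating_word [simp]:
  "i < n \<Longrightarrow> alternating_word n b ! i \<longleftrightarrow> (if even i then b else \<not> b)"
  by (simp add: alternating_word_def)

lemma alternating_word_eqI:
  "length w = n \<Longrightarrow> (\<And>i. i < n \<Longrightarrow> w ! i \<longleftrightarrow> (if even i then b else \<not> b)) \<Longrightarrow>
    w = alternating_word n b"
  by (rule nth_equalityI) simp_all

lemma butlast_indicator_word:
  "butlast (indicator_word (Suc n) P) = indicator_word n (filter (\<lambda>p. p < n) P)"
  by (rule indicator_word_eqI) (simp_all add: nth_butlast)

fun tl_support :: "nat list \<Rightarrow> nat list" where
  "tl_support [] = []"
| "tl_support (p # P) = (if p = 0 then tl_support P else (p - 1) # tl_support P)"

lemma set_tl_support: "i \<in> set (tl_support P) \<longleftrightarrow> Suc i \<in> set P"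
  by (induction P rule: tl_support.induct) auto

lemma tl_indicator_word: "tl (indicator_word (Suc n) P) = indicator_word n (tl_support P)"
  by (rule indicator_word_eqI) (simp_all add: nth_tl set_tl_support)

lemma sorted_tl_support: "sorted_wrt (<) P \<Longrightarrow> sorted_wrt (<) (tl_support P)"
proof (induction P rule: tl_support.induct)
  case (2 p P)
  have "p - 1 < i" if "p \<noteq> 0" "i \<in> set (tl_support P)" for i
  proof -
    from that(2) have "Suc i \<in> set P" by (simp add: set_tl_support)
    with "2.prems" that(1) show ?thesis by auto
  qed
  with 2 show ?case by auto
qed simp

lemma snoc_indicator_word:
  "set P \<subseteq> {..<n} \<Longrightarrow> indicator_word n P @ [c] = indicator_word (Suc n) (P @ (if c then [n] else []))"
  by (rule indicator_word_eqI) (auto simp: nth_append)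

lemma indicator_word_inject:
  assumes "sorted_wrt (<) P" "sorted_wrt (<) Q" "set P \<subseteq> {..<n}" "set Q \<subseteq> {..<n}"
    and "indicator_word n P = indicator_word n Q"
  shows "P = Q"
proof -
  have "set P = set Q"
  proof (intro set_eqI)
    fix i
    show "i \<in> set P \<longleftrightarrow> i \<in> set Q"
    proof (cases "i < n")
      case True
      then show ?thesis using nth_indicator_word[OF True] assms(5) by metis
    qed (use assms(3,4) in auto)
  qed
  with assms(1,2) show ?thesis by (metis strict_sorted_equal)
qed

lemma butlast_alternating_word: "butlast (alternating_word (Suc n) b) = alternating_word n b"
  by (simp add: alternating_word_def)

lemma tl_alternating_word: "tl (alternating_word (Suc n) b) = alternating_word n (\<not> b)"
  by (rule alternating_word_eqI) (simp_all add: nth_tl)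

lemma map_Not_alternating_word: "map Not (alternating_word n b) = alternating_word n (\<not> b)"
  by (simp add: alternating_word_def)

lemma not_antipower3_alternating_word: "\<not> antipower3 (alternating_word n b)"
proof
  assume "antipower3 (alternating_word n b)"
  then obtain l i where "n = 3 * l" "i < l"
    "alternating_word n b ! i \<noteq> alternating_word n b ! (2 * l + i)"
    unfolding antipower3_iff_nth by auto
  then show False by simp
qed

lemma count_list_indicator_word: "count_list (indicator_word n P) True \<le> length P"
proof -
  have "count_list (indicator_word n P) True = length (filter (\<lambda>i. i \<in> set P) [0..<n])"
    by (simp add: indicator_word_def count_list_eq_length_filter filter_map comp_def)
  also have "\<dots> = card (set (filter (\<lambda>i. i \<in> set P) [0..<n]))"
    by (rule distinct_card[symmetric]) simp
  also have "\<dots> \<le> card (set P)" by (rule card_mono) auto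
  also have "\<dots> \<le> length P" by (rule card_length)
  finally show ?thesis .
qed

lemma count_list_map_Not: "count_list (map Not w) True = length w - count_list w True"
proof -
  have "count_list w True + count_list w False = length w"
    by (induction w) auto
  moreover have "count_list (map Not w) True = count_list w False"
    by (induction w) auto
  ultimately show ?thesis by simp
qed

lemma count_list_alternating_word:
  "count_list (alternating_word n b) True = (if b then (n + 1) div 2 else n div 2)"
proof (induction n)
  case (Suc n)
  have "alternating_word (Suc n) b = alternating_word n b @ [if even n then b else \<not> b]"
    by (simp add: alternating_word_def)
  with Suc show ?case by (cases b) auto
qed (simp add: alternating_word_def)

lemma count_list_butlast_tl:
  assumes "v \<noteq> []"
  shows "count_list (butlast v) True \<le> Suc (count_list (tl v) True)"
    and "count_list (tl v) True \<le> Suc (count_list (butlast v) True)"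
proof -
  have "count_list v True = count_list (butlast v) True + count_list [last v] True"
    by (metis assms append_butlast_last_id count_list_append)
  moreover have "count_list v True = count_list [hd v] True + count_list (tl v) True"
    by (metis assms list.collapse append_Cons append_Nil count_list_append)
  ultimately show "count_list (butlast v) True \<le> Suc (count_list (tl v) True)"
    and "count_list (tl v) True \<le> Suc (count_list (butlast v) True)"
    by (auto split: if_splits)
qed

section \<open>Sparse supports\<close>

(* The second argument stands for n mod 3; it is kept separate so that the case analyses below
   can fix it to a literal. *)
definition sparse_supports :: "nat \<Rightarrow> nat \<Rightarrow> nat list list" where
  "sparse_supports n r = [[]] @ map (\<lambda>i. [i]) [0..<n] @ [[n-2,n-1], [n-3,n-1], [0,1], [0,2]]
     @ (if r = 0 then [] else [[0,n-1]])
     @ (if r = 2 then [[0,n-2], [1,n-1], [0,n-2,n-1], [0,1,n-1]] else [])"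

(* The extensions of sparse supports to length n + 1 that fail only because, when 3 divides
   n + 1, the extended word is an antipower. *)
definition antipower_supports :: "nat \<Rightarrow> nat list list" where
  "antipower_supports n = [[0,n], [2,n], [1,n], [1,n-1], [0,n-1], [0,n-1,n], [0,n-2], [0,n-2,n],
     [0,2,n], [0,1,n], [0,1,n-1], [0,1,n-1,n], [1,n-1,n]]"

lemma in_sparse_supports_iff:
  "P \<in> set (sparse_supports n r) \<longleftrightarrow> P = [] \<or> (\<exists>i<n. P = [i]) \<or> P = [n-2,n-1] \<or> P = [n-3,n-1]
     \<or> P = [0,1] \<or> P = [0,2] \<or> (r \<noteq> 0 \<and> P = [0,n-1])
     \<or> (r = 2 \<and> (P = [0,n-2] \<or> P = [1,n-1] \<or> P = [0,n-2,n-1] \<or> P = [0,1,n-1]))"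
  unfolding sparse_supports_def set_append set_map set_upt
  by (cases "r = 0"; cases "r = 2") (simp_all add: image_iff atLeast0LessThan; blast)+

lemma sparse_supports_wf:
  "n \<ge> 3 \<Longrightarrow> P \<in> set (sparse_supports n r) \<Longrightarrow>
    sorted_wrt (<) P \<and> set P \<subseteq> {..<n} \<and> length P \<le> 3"
  unfolding in_sparse_supports_iff by auto

(* Stated for n = m + 3 so that the simplifier can evaluate n - 1, n - 2 and n - 3. *)
lemma sparse_supports_extend_aux:
  assumes "m \<ge> 9" "r < 3" "P \<in> set (sparse_supports (m+3) r)"
    "tl_support (P @ (if c then [m+3] else [])) \<in> set (sparse_supports (m+3) r)"
  shows "P @ (if c then [m+3] else []) \<in> set (sparse_supports (m+4) (Suc r mod 3))
    \<or> (r = 2 \<and> P @ (if c then [m+3] else []) \<in> set (antipower_supports (m+3)))"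
proof -
  from assms(2) consider "r = 0" | "r = 1" | "r = 2" by linarith
  then show ?thesis
  proof cases
    case 1
    show ?thesis using assms(3,4) unfolding 1 in_sparse_supports_iff
      apply (elim disjE exE conjE)
      apply (cases c; simp; use assms(1) in \<open>auto split: if_splits\<close>)+
      done
  next
    case 2
    show ?thesis using assms(3,4) unfolding 2 in_sparse_supports_iff
      apply (elim disjE exE conjE)
      apply (cases c; simp; use assms(1) in \<open>auto split: if_splits\<close>)+
      done
  next
    case 3
    show ?thesis using assms(3,4) unfolding 3 in_sparse_supports_iff antipower_supports_def
      apply (elim disjE exE conjE)
      apply (cases c; simp; use assms(1) in \<open>auto split: if_splits\<close>)+
      done
  qed
qed

lemma sparse_supports_restrict_aux:
  assumes "m \<ge> 9" "r < 3" "Q \<in> set (sparse_supports (m+4) (Suc r mod 3))"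
  shows "filter (\<lambda>p. p < m+3) Q \<in> set (sparse_supports (m+3) r)
    \<and> tl_support Q \<in> set (sparse_supports (m+3) r)"
proof -
  from assms(2) consider "r = 0" | "r = 1" | "r = 2" by linarith
  then show ?thesis
  proof cases
    case 1
    show ?thesis using assms(3) unfolding 1 in_sparse_supports_iff
      apply (elim disjE exE conjE)
      apply (simp; use assms(1) in \<open>auto split: if_splits\<close>)+
      done
  next
    case 2
    show ?thesis using assms(3) unfolding 2 in_sparse_supports_iff
      apply (elim disjE exE conjE)
      apply (simp; use assms(1) in \<open>auto split: if_splits\<close>)+
      done
  next
    case 3
    show ?thesis using assms(3) unfolding 3 in_sparse_supports_iff
      apply (elim disjE exE conjE)
      apply (simp; use assms(1) in \<open>auto split: if_splits\<close>)+
      done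
  qed
qed

lemma sparse_supports_Suc:
  assumes "n \<ge> 12" "P \<in> set (sparse_supports n (n mod 3))"
    "tl_support (P @ (if c then [n] else [])) \<in> set (sparse_supports n (n mod 3))"
  shows "P @ (if c then [n] else []) \<in> set (sparse_supports (Suc n) (Suc n mod 3))
    \<or> (n mod 3 = 2 \<and> P @ (if c then [n] else []) \<in> set (antipower_supports n))"
proof -
  define m where "m = n - 3"
  have n: "m + 3 = n" "m + 4 = Suc n" and "m \<ge> 9"
    using assms(1) by (simp_all add: m_def)
  from sparse_supports_extend_aux[of m "n mod 3" P c] \<open>m \<ge> 9\<close> assms(2,3) show ?thesis
    unfolding n mod_Suc_eq by simp
qed

lemma sparse_supports_restrict:
  assumes "n \<ge> 12" "Q \<in> set (sparse_supports (Suc n) (Suc n mod 3))"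
  shows "filter (\<lambda>p. p < n) Q \<in> set (sparse_supports n (n mod 3))
    \<and> tl_support Q \<in> set (sparse_supports n (n mod 3))"
proof -
  define m where "m = n - 3"
  have n: "m + 3 = n" "m + 4 = Suc n" and "m \<ge> 9"
    using assms(1) by (simp_all add: m_def)
  from sparse_supports_restrict_aux[of m "n mod 3" Q] \<open>m \<ge> 9\<close> assms(2) show ?thesis
    unfolding n mod_Suc_eq by simp
qed

lemma not_antipower3_indicator_word:
  assumes "n \<ge> 13" "P \<in> set (sparse_supports n (n mod 3))"
  shows "\<not> antipower3 (indicator_word n P)"
proof
  assume ap: "antipower3 (indicator_word n P)"
  then obtain l where n: "n = 3 * l" by (auto simp: antipower3_iff_nth)
  with assms(1) have "l \<ge> 5" by simp
  have "\<exists>p\<in>set P. p < 2 * l" "\<exists>p\<in>set P. p < l \<or> 2 * l \<le> p" "\<exists>p\<in>set P. l \<le> p"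
    using antipower3_blocks_not_all_False[OF ap, of l] by (auto simp: n)
  with \<open>l \<ge> 5\<close> assms(2) show False unfolding in_sparse_supports_iff n
    apply (elim disjE exE conjE)
    apply simp_all
    apply (elim disjE; linarith)+
    done
qed

lemma antipower3_indicator_word_antipower_supports:
  assumes "Suc n = 3 * l" "l \<ge> 5" "Q \<in> set (antipower_supports n)"
  shows "antipower3 (indicator_word (Suc n) Q)"
proof -
  have "hd Q < l \<and> hd Q \<in> set Q \<and> l + hd Q \<notin> set Q \<and> 2 * l + hd Q \<notin> set Q
    \<and> last Q - 2 * l < l \<and> l + (last Q - 2 * l) \<notin> set Q \<and> 2 * l + (last Q - 2 * l) \<in> set Q"
  proof -
    have n: "n = 3 * l - 1" using assms(1) by linarith
    show ?thesis using assms(2,3) unfolding antipower_supports_def n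
      by (simp; elim disjE; simp; presburger)
  qed
  then show ?thesis
    by (intro antipower3I[of _ l "hd Q" "last Q - 2 * l"]) (simp_all add: assms(1))
qed

section \<open>The antipower-free words of length at least 12\<close>

definition A_list :: "nat \<Rightarrow> bool list list" where
  "A_list n = [alternating_word n False, alternating_word n True]
     @ map (indicator_word n) (sparse_supports n (n mod 3))
     @ map (\<lambda>P. map Not (indicator_word n P)) (sparse_supports n (n mod 3))"

lemma in_A_list_iff:
  "w \<in> set (A_list n) \<longleftrightarrow> w = alternating_word n False \<or> w = alternating_word n True
     \<or> (\<exists>P\<in>set (sparse_supports n (n mod 3)). w = indicator_word n P)
     \<or> (\<exists>P\<in>set (sparse_supports n (n mod 3)). w = map Not (indicator_word n P))"
  unfolding A_list_def by auto

lemma map_Not_in_A_list: "w \<in> set (A_list n) \<Longrightarrow> map Not w \<in> set (A_list n)"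
  unfolding in_A_list_iff by (auto simp: map_Not_alternating_word comp_def)

lemma count_list_indicator_word_sparse_supports:
  "n \<ge> 3 \<Longrightarrow> P \<in> set (sparse_supports n r) \<Longrightarrow> count_list (indicator_word n P) True \<le> 3"
  using count_list_indicator_word[of n P] sparse_supports_wf[of n P r] by linarith

lemma count_list_alternating_word_bounds:
  "n \<ge> 12 \<Longrightarrow>
    6 \<le> count_list (alternating_word n b) True \<and> count_list (alternating_word n b) True + 6 \<le> n"
  by (auto simp: count_list_alternating_word)

lemma A_list_cases:
  assumes "n \<ge> 12" "w \<in> set (A_list n)"
  obtains (alternating) b where "w = alternating_word n b"
      "6 \<le> count_list w True" "count_list w True + 6 \<le> n"
    | (sparse) P where "P \<in> set (sparse_supports n (n mod 3))" "w = indicator_word n P"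
      "count_list w True \<le> 3"
    | (cosparse) P where "P \<in> set (sparse_supports n (n mod 3))" "w = map Not (indicator_word n P)"
      "n \<le> count_list w True + 3"
proof -
  note sparse_count = count_list_indicator_word_sparse_supports[of n _ "n mod 3"]
  note alternating_count = count_list_alternating_word_bounds[OF assms(1)]
  from assms(2) show ?thesis unfolding in_A_list_iff
  proof (elim disjE bexE)
    fix P assume "P \<in> set (sparse_supports n (n mod 3))" "w = map Not (indicator_word n P)"
    moreover from this have "n \<le> count_list w True + 3"
      using sparse_count[of P] assms(1) by (simp add: count_list_map_Not)
    ultimately show ?thesis by (rule cosparse)
  qed (use alternating alternating_count sparse sparse_count assms(1) in auto)
qed

lemma A_list_Suc_restrict:
  assumes "n \<ge> 12" "v \<in> set (A_list (Suc n))"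
  shows "butlast v \<in> set (A_list n) \<and> tl v \<in> set (A_list n) \<and> \<not> antipower3 v"
proof -
  have indicator_case: "butlast v \<in> set (A_list n) \<and> tl v \<in> set (A_list n) \<and> \<not> antipower3 v"
    if "Q \<in> set (sparse_supports (Suc n) (Suc n mod 3))" "v = indicator_word (Suc n) Q" for Q v
    using that sparse_supports_restrict[OF assms(1) that(1)]
      not_antipower3_indicator_word[OF _ that(1)] assms(1)
    by (auto simp: in_A_list_iff butlast_indicator_word tl_indicator_word)
  from assms(2) consider (alternating) b where "v = alternating_word (Suc n) b"
    | (sparse) Q where "Q \<in> set (sparse_supports (Suc n) (Suc n mod 3))"
        "v = indicator_word (Suc n) Q"
    | (cosparse) Q where "Q \<in> set (sparse_supports (Suc n) (Suc n mod 3))"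
        "v = map Not (indicator_word (Suc n) Q)"
    unfolding in_A_list_iff by blast
  then show ?thesis
  proof cases
    case alternating
    then show ?thesis
      by (cases b) (auto simp: in_A_list_iff butlast_alternating_word tl_alternating_word
          not_antipower3_alternating_word)
  next
    case (sparse Q)
    then show ?thesis by (rule indicator_case)
  next
    case (cosparse Q)
    then have "butlast (map Not v) \<in> set (A_list n) \<and> tl (map Not v) \<in> set (A_list n)
        \<and> \<not> antipower3 (map Not v)"
      using indicator_case[of Q "map Not v"] by (simp add: comp_def)
    then have "map Not (butlast v) \<in> set (A_list n)" "map Not (tl v) \<in> set (A_list n)"
      "\<not> antipower3 v"
      by (simp_all add: map_butlast map_tl antipower3_map_Not)
    then show ?thesis
      using map_Not_in_A_list[of "map Not (butlast v)"] map_Not_in_A_list[of "map Not (tl v)"]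
      by (simp add: comp_def)
  qed
qed

lemma alternating_word_Suc_eqI:
  assumes "butlast v = alternating_word n b" "tl v = alternating_word n b'" "n \<ge> 2"
  shows "v = alternating_word (Suc n) b"
proof -
  have "length (butlast v) = n" using assms(1) by simp
  with assms(3) have len: "length v = Suc n" by (cases v rule: rev_exhaust) auto
  have prefix: "v ! i \<longleftrightarrow> (if even i then b else \<not> b)" if "i < n" for i
    using that len assms(1) nth_butlast[of i v] by simp
  have "v ! 1 \<longleftrightarrow> b'" using len assms(2,3) nth_tl[of 0 v] by simp
  then have "b' \<longleftrightarrow> \<not> b" using prefix[of 1] assms(3) by simp
  show ?thesis
  proof (rule alternating_word_eqI[OF len])
    fix i assume "i < Suc n"
    show "v ! i \<longleftrightarrow> (if even i then b else \<not> b)"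
    proof (cases "i < n")
      case False
      with \<open>i < Suc n\<close> assms(3) have i: "i = Suc (n - 1)" by simp
      have "v ! i = tl v ! (n - 1)" using len assms(3) unfolding i by (simp add: nth_tl)
      with \<open>b' \<longleftrightarrow> \<not> b\<close> assms(2,3) show ?thesis unfolding i by auto
    qed (rule prefix)
  qed
qed

lemma indicator_word_Suc_in_A_list:
  assumes "n \<ge> 12" "length v = Suc n" "\<not> antipower3 v"
    and P: "P \<in> set (sparse_supports n (n mod 3))" "butlast v = indicator_word n P"
    and P': "P' \<in> set (sparse_supports n (n mod 3))" "tl v = indicator_word n P'"
  shows "v \<in> set (A_list (Suc n))"
proof -
  define Q where "Q = P @ (if last v then [n] else [])"
  have wf: "sorted_wrt (<) P" "set P \<subseteq> {..<n}" "sorted_wrt (<) P'" "set P' \<subseteq> {..<n}"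
    using sparse_supports_wf[OF _ P(1)] sparse_supports_wf[OF _ P'(1)] assms(1) by auto
  have "v \<noteq> []" using assms(2) by auto
  then have "v = butlast v @ [last v]" by simp
  then have v: "v = indicator_word (Suc n) Q"
    unfolding Q_def P(2) using snoc_indicator_word[OF wf(2)] by metis
  have "sorted_wrt (<) Q" "set Q \<subseteq> {..<Suc n}"
    using wf(1,2) unfolding Q_def by (auto simp: sorted_wrt_append)
  then have "sorted_wrt (<) (tl_support Q)" "set (tl_support Q) \<subseteq> {..<n}"
    by (auto simp: sorted_tl_support set_tl_support)
  moreover have "indicator_word n (tl_support Q) = indicator_word n P'"
    using P'(2) v tl_indicator_word by metis
  ultimately have "tl_support Q = P'"
    using indicator_word_inject wf(3,4) by blast
  then have "Q \<in> set (sparse_supports (Suc n) (Suc n mod 3))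
      \<or> (n mod 3 = 2 \<and> Q \<in> set (antipower_supports n))"
    using sparse_supports_Suc[OF assms(1) P(1), of "last v"] P'(1) unfolding Q_def by simp
  moreover have "\<not> (n mod 3 = 2 \<and> Q \<in> set (antipower_supports n))"
  proof
    assume "n mod 3 = 2 \<and> Q \<in> set (antipower_supports n)"
    then have "n mod 3 = 2" "Q \<in> set (antipower_supports n)" by simp_all
    define l where "l = Suc n div 3"
    have "Suc n = 3 * l" using \<open>n mod 3 = 2\<close> unfolding l_def by presburger
    moreover have "l \<ge> 5" using \<open>n mod 3 = 2\<close> assms(1) unfolding l_def by presburger
    ultimately have "antipower3 v"
      unfolding v by (rule antipower3_indicator_word_antipower_supports) fact
    with assms(3) show False by contradiction
  qed
  ultimately show ?thesis unfolding in_A_list_iff v by blast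
qed

lemma A_list_Suc_extend:
  assumes "n \<ge> 12" "length v = Suc n" "\<not> antipower3 v"
    and "butlast v \<in> set (A_list n)" "tl v \<in> set (A_list n)"
  shows "v \<in> set (A_list (Suc n))"
proof -
  have nonempty: "u \<noteq> []" if "length u = Suc n" for u :: "bool list"
    using that by auto
  have sparse_case: "u \<in> set (A_list (Suc n))"
    if u: "length u = Suc n" "\<not> antipower3 u" "butlast u \<in> set (A_list n)" "tl u \<in> set (A_list n)"
      and "count_list (butlast u) True \<le> 3" for u
  proof -
    obtain P where "P \<in> set (sparse_supports n (n mod 3))" "butlast u = indicator_word n P"
      by (rule A_list_cases[OF assms(1) u(3)])
        (use \<open>count_list (butlast u) True \<le> 3\<close> assms(1) in \<open>linarith | blast\<close>)+
    moreover obtain P' where "P' \<in> set (sparse_supports n (n mod 3))" "tl u = indicator_word n P'"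
      by (rule A_list_cases[OF assms(1) u(4)])
        (use \<open>count_list (butlast u) True \<le> 3\<close> count_list_butlast_tl[OF nonempty[OF u(1)]] assms(1)
          in \<open>linarith | blast\<close>)+
    ultimately show ?thesis
      using indicator_word_Suc_in_A_list[OF assms(1) u(1,2)] by blast
  qed
  show ?thesis
  proof (cases rule: A_list_cases[OF assms(1,4), case_names alternating sparse cosparse])
    case (alternating b)
    obtain b' where "tl v = alternating_word n b'"
      by (rule A_list_cases[OF assms(1,5)])
        (use alternating(2,3) count_list_butlast_tl[OF nonempty[OF assms(2)]]
          in \<open>linarith | blast\<close>)+
    with alternating(1) assms(1) have "v = alternating_word (Suc n) b"
      by (intro alternating_word_Suc_eqI) auto
    then show ?thesis by (cases b) (simp_all add: in_A_list_iff)
  next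
    case sparse
    then show ?thesis using sparse_case assms(2-5) by blast
  next
    case (cosparse P)
    have "count_list (butlast (map Not v)) True \<le> 3"
      using cosparse(3) assms(2) by (simp add: map_butlast[symmetric] count_list_map_Not)
    then have "map Not v \<in> set (A_list (Suc n))"
      using sparse_case[of "map Not v"] assms(2-5) map_Not_in_A_list
      by (simp add: antipower3_map_Not flip: map_butlast map_tl)
    from map_Not_in_A_list[OF this] show ?thesis by (simp add: comp_def)
  qed
qed

lemma A_eq_A_list: "n \<ge> 12 \<Longrightarrow> A n = set (A_list n)"
proof (induction n rule: nat_induct_at_least)
  case base
  show ?case unfolding A_eq_extend_avoiding_power by code_simp
next
  case (Suc n)
  show ?case
  proof (intro set_eqI iffI)
    fix v assume "v \<in> A (Suc n)"
    then show "v \<in> set (A_list (Suc n))"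
      using A_list_Suc_extend[OF Suc.hyps] Suc.IH unfolding A_Suc_iff by blast
  next
    fix v assume "v \<in> set (A_list (Suc n))"
    moreover from this have "length v = Suc n" by (auto simp: in_A_list_iff)
    ultimately show "v \<in> A (Suc n)"
      using A_list_Suc_restrict[OF Suc.hyps] Suc.IH unfolding A_Suc_iff by blast
  qed
qed

lemma distinct_sparse_supports: "n \<ge> 5 \<Longrightarrow> distinct (sparse_supports n r)"
  unfolding sparse_supports_def
  by (cases "r = 0"; cases "r = 2") (auto simp: distinct_map inj_on_def)

lemma length_sparse_supports:
  "length (sparse_supports n r) = n + 5 + (if r = 0 then 0 else 1) + (if r = 2 then 4 else 0)"
  unfolding sparse_supports_def by simp

lemma inj_on_indicator_word_sparse_supports:
  "n \<ge> 3 \<Longrightarrow> inj_on (indicator_word n) (set (sparse_supports n r))"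
  by (rule inj_onI) (use indicator_word_inject sparse_supports_wf in blast)

lemma distinct_A_list:
  assumes "n \<ge> 12"
  shows "distinct (A_list n)"
proof -
  let ?S = "set (sparse_supports n (n mod 3))"
  have inj: "inj_on (indicator_word n) ?S" "inj_on (\<lambda>P. map Not (indicator_word n P)) ?S"
    using inj_on_indicator_word_sparse_supports[of n "n mod 3"] assms
    by (auto simp: inj_on_def)
  have sparse: "count_list (indicator_word n P) True \<le> 3"
    and cosparse: "n \<le> count_list (map Not (indicator_word n P)) True + 3" if "P \<in> ?S" for P
    using count_list_indicator_word_sparse_supports[OF _ that] assms
    by (auto simp: count_list_map_Not)
  note alternating = count_list_alternating_word_bounds[OF assms]
  have "count_list (alternating_word n b) True \<noteq> count_list (indicator_word n P) True"
    "count_list (alternating_word n b) True \<noteq> count_list (map Not (indicator_word n P)) True"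
    "count_list (indicator_word n P') True \<noteq> count_list (map Not (indicator_word n P)) True"
    if "P \<in> ?S" "P' \<in> ?S" for b P P'
    using sparse[OF that(1)] sparse[OF that(2)] cosparse[OF that(1)] alternating[of b] assms
    by linarith+
  then have "alternating_word n b \<noteq> indicator_word n P"
    "alternating_word n b \<noteq> map Not (indicator_word n P)"
    "indicator_word n P' \<noteq> map Not (indicator_word n P)" if "P \<in> ?S" "P' \<in> ?S" for b P P'
    using that by metis+
  moreover have "alternating_word n False ! 0 \<noteq> alternating_word n True ! 0"
    using assms by simp
  then have "alternating_word n False \<noteq> alternating_word n True" by metis
  ultimately show ?thesis
    using inj distinct_sparse_supports[of n "n mod 3"] assms
    unfolding A_list_def by (auto simp: distinct_map)
qed

lemma card_A_list:
  "n \<ge> 12 \<Longrightarrow>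
    card (set (A_list n)) =
      2 * n + 12 + (if n mod 3 = 0 then 0 else 2) + (if n mod 3 = 2 then 8 else 0)"
  by (simp add: distinct_card distinct_A_list) (simp add: A_list_def length_sparse_supports)

section \<open>The languages\<close>

lemma pow_singleton: "pow [b] m = replicate m b"
  by (induction m) (simp_all add: pow_def)

lemma L_0s_length: "{w \<in> L_0s. length w = n} = {indicator_word n []}"
proof -
  have "indicator_word n [] = replicate n False" by (rule indicator_word_eqI[symmetric]) simp_all
  then show ?thesis by (auto simp: L_0s_def pow_singleton)
qed

lemma L_01s_L_01s0_length: "{w \<in> L_01s \<union> L_01s0. length w = n} = {alternating_word n False}"
proof -
  have even: "pow [False, True] m = alternating_word (2 * m) False" for m
  proof (induction m)
    case (Suc m)
    have "pow [False, True] (Suc m) = pow [False, True] m @ [False, True]"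
      by (simp add: pow_def flip: replicate_append_same)
    with Suc show ?case by (simp add: alternating_word_def)
  qed (simp add: pow_def alternating_word_def)
  have odd: "alternating_word (2 * m) False @ [False] = alternating_word (Suc (2 * m)) False" for m
    by (simp add: alternating_word_def)
  have "L_01s \<union> L_01s0 = range (\<lambda>n. alternating_word n False)"
  proof (intro equalityI subsetI)
    fix w assume "w \<in> range (\<lambda>n. alternating_word n False)"
    then obtain n where w: "w = alternating_word n False" by blast
    show "w \<in> L_01s \<union> L_01s0"
    proof (cases "even n")
      case True
      then obtain m where "n = 2 * m" by blast
      with w even show ?thesis by (auto simp: L_01s_def)
    next
      case False
      then obtain m where "n = Suc (2 * m)" by (metis oddE Suc_eq_plus1)
      with w show ?thesis by (auto simp: L_01s0_def even odd[symmetric])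
    qed
  qed (auto simp: L_01s_def L_01s0_def even odd)
  then show ?thesis by auto
qed

lemma L_0s10s_length: "{w \<in> L_0s10s. length w = n} = (\<lambda>i. indicator_word n [i]) ` {..<n}"
proof -
  have word: "replicate i False @ [True] @ replicate (n - Suc i) False = indicator_word n [i]"
    if "i < n" for i
    using that by (intro indicator_word_eqI) (auto simp: nth_append nth_Cons')
  show ?thesis
  proof (intro equalityI subsetI)
    fix w assume "w \<in> {w \<in> L_0s10s. length w = n}"
    then obtain i j where w: "w = replicate i False @ [True] @ replicate j False" "length w = n"
      by (auto simp: L_0s10s_def pow_singleton)
    then have "i < n" "j = n - Suc i" by auto
    with w word show "w \<in> (\<lambda>i. indicator_word n [i]) ` {..<n}" by auto
  next
    fix w assume "w \<in> (\<lambda>i. indicator_word n [i]) ` {..<n}"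
    then obtain i where "i < n" "w = indicator_word n [i]" by auto
    with word[OF \<open>i < n\<close>, symmetric] show "w \<in> {w \<in> L_0s10s. length w = n}"
      by (auto simp: L_0s10s_def pow_singleton)
  qed
qed

lemma L_0s011_length:
  "n \<ge> 3 \<Longrightarrow> {w \<in> L_0s011. length w = n} = {indicator_word n [n-2, n-1]}"
proof -
  assume "n \<ge> 3"
  then have "indicator_word n [n-2, n-1] = replicate (n - 3) False @ [False, True, True]"
    by (intro indicator_word_eqI[symmetric]) (auto simp: nth_append nth_Cons')
  with \<open>n \<ge> 3\<close> show ?thesis by (auto simp: L_0s011_def pow_singleton)
qed

lemma L_0s101_length:
  "n \<ge> 3 \<Longrightarrow> {w \<in> L_0s101. length w = n} = {indicator_word n [n-3, n-1]}"
proof -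
  assume "n \<ge> 3"
  then have "indicator_word n [n-3, n-1] = replicate (n - 3) False @ [True, False, True]"
    by (intro indicator_word_eqI[symmetric]) (auto simp: nth_append nth_Cons')
  with \<open>n \<ge> 3\<close> show ?thesis by (auto simp: L_0s101_def pow_singleton)
qed

lemma L_10s1_length:
  "n \<ge> 2 \<Longrightarrow> {w \<in> L_10s1. length w = n} = {indicator_word n [0, n-1]}"
proof -
  assume "n \<ge> 2"
  then have "indicator_word n [0, n-1] = [True] @ replicate (n - 2) False @ [True]"
    by (intro indicator_word_eqI[symmetric]) (auto simp: nth_append nth_Cons')
  with \<open>n \<ge> 2\<close> show ?thesis by (auto simp: L_10s1_def pow_singleton)
qed

lemma L_10s10_length:
  "n \<ge> 3 \<Longrightarrow> {w \<in> L_10s10. length w = n} = {indicator_word n [0, n-2]}"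
proof -
  assume "n \<ge> 3"
  then have "indicator_word n [0, n-2] = [True] @ replicate (n - 3) False @ [True, False]"
    by (intro indicator_word_eqI[symmetric]) (auto simp: nth_append nth_Cons')
  with \<open>n \<ge> 3\<close> show ?thesis by (auto simp: L_10s10_def pow_singleton)
qed

lemma L_10s11_length:
  "n \<ge> 3 \<Longrightarrow> {w \<in> L_10s11. length w = n} = {indicator_word n [0, n-2, n-1]}"
proof -
  assume "n \<ge> 3"
  then have "indicator_word n [0, n-2, n-1] = [True] @ replicate (n - 3) False @ [True, True]"
    by (intro indicator_word_eqI[symmetric]) (auto simp: nth_append nth_Cons')
  with \<open>n \<ge> 3\<close> show ?thesis by (auto simp: L_10s11_def pow_singleton)
qed

definition rev_support :: "nat \<Rightarrow> nat list \<Rightarrow> nat list" where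
  "rev_support n P = rev (map (\<lambda>p. n - 1 - p) P)"

lemma rev_indicator_word:
  assumes "set P \<subseteq> {..<n}"
  shows "rev (indicator_word n P) = indicator_word n (rev_support n P)"
proof (rule indicator_word_eqI)
  fix i assume "i < n"
  have "n - Suc i \<in> set P \<longleftrightarrow> i \<in> (\<lambda>p. n - 1 - p) ` set P"
    using \<open>i < n\<close> assms by (force simp: image_iff)
  with \<open>i < n\<close> show "rev (indicator_word n P) ! i \<longleftrightarrow> i \<in> set (rev_support n P)"
    by (simp add: rev_nth rev_support_def)
qed simp

lemma rev_alternating_word:
  "rev (alternating_word n b) = alternating_word n (if even n then \<not> b else b)"
proof (rule alternating_word_eqI)
  fix i assume "i < n"
  then have "even (n - Suc i) \<longleftrightarrow> (even n \<longleftrightarrow> odd i)" by presburger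
  with \<open>i < n\<close> show "rev (alternating_word n b) ! i \<longleftrightarrow>
      (if even i then if even n then \<not> b else b else \<not> (if even n then \<not> b else b))"
    by (auto simp: rev_nth)
qed simp

lemma Cl_eq_A_list:
  assumes L: "{w \<in> L. length w = n} = {alternating_word n False} \<union> indicator_word n ` T"
    and T: "\<And>P. P \<in> T \<Longrightarrow> set P \<subseteq> {..<n}"
      "T \<union> rev_support n ` T = set (sparse_supports n (n mod 3))"
  shows "Cl n L = set (A_list n)"
proof -
  let ?I = "indicator_word n ` T" and ?R = "indicator_word n ` rev_support n ` T"
  have rev_I: "rev ` ?I = ?R"
    unfolding image_image by (rule image_cong) (simp_all add: rev_indicator_word T(1))
  have "Cl n L = {alternating_word n False} \<union> ?I \<union> map Not ` ({alternating_word n False} \<union> ?I)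
      \<union> rev ` ({alternating_word n False} \<union> ?I) \<union> map Not ` rev ` ({alternating_word n False} \<union> ?I)"
    unfolding Cl_def Let_def L complement_def[abs_def] by (simp add: image_comp)
  also have "\<dots> = {alternating_word n False, alternating_word n True}
      \<union> indicator_word n ` (T \<union> rev_support n ` T)
      \<union> (\<lambda>P. map Not (indicator_word n P)) ` (T \<union> rev_support n ` T)"
    unfolding image_Un rev_I
    by (auto simp: map_Not_alternating_word rev_alternating_word image_comp)
  also have "\<dots> = set (A_list n)"
    unfolding T(2) A_list_def by auto
  finally show ?thesis .
qed

definition language_supports :: "nat \<Rightarrow> nat \<Rightarrow> nat list set" where
  "language_supports n r = {[]} \<union> (\<lambda>i. [i]) ` {..<n} \<union> {[n-2,n-1], [n-3,n-1]}
     \<union> (if r = 0 then {} else {[0,n-1]}) \<union> (if r = 2 then {[0,n-2], [0,n-2,n-1]} else {})"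

lemma language_supports_bounded: "n \<ge> 3 \<Longrightarrow> P \<in> language_supports n r \<Longrightarrow> set P \<subseteq> {..<n}"
  by (auto simp: language_supports_def split: if_splits)

lemma language_supports_rev_support:
  assumes "n \<ge> 5"
  shows "language_supports n r \<union> rev_support n ` language_supports n r = set (sparse_supports n r)"
proof -
  have flip: "(\<lambda>i. n - 1 - i) ` {..<n} = {..<n}"
  proof (intro equalityI subsetI)
    fix i assume "i \<in> {..<n}"
    then show "i \<in> (\<lambda>i. n - 1 - i) ` {..<n}" by (intro image_eqI[of _ _ "n - 1 - i"]) auto
  qed auto
  have "rev_support n ` (\<lambda>i. [i]) ` {..<n} = (\<lambda>i. [i]) ` (\<lambda>i. n - 1 - i) ` {..<n}"
    by (simp add: image_image rev_support_def)
  also have "\<dots> = (\<lambda>i. [i]) ` {..<n}" unfolding flip ..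
  finally have singletons: "rev_support n ` (\<lambda>i. [i]) ` {..<n} = (\<lambda>i. [i]) ` {..<n}" .
  have rev_pairs: "rev_support n [] = []" "rev_support n [n-2,n-1] = [0,1]"
    "rev_support n [n-3,n-1] = [0,2]" "rev_support n [0,n-1] = [0,n-1]"
    "rev_support n [0,n-2] = [1,n-1]" "rev_support n [0,n-2,n-1] = [0,1,n-1]"
    using assms by (simp_all add: rev_support_def)
  have sparse: "set (sparse_supports n r) =
      {[]} \<union> (\<lambda>i. [i]) ` {..<n} \<union> {[n-2,n-1], [n-3,n-1], [0,1], [0,2]}
      \<union> (if r = 0 then {} else {[0,n-1]})
      \<union> (if r = 2 then {[0,n-2], [1,n-1], [0,n-2,n-1], [0,1,n-1]} else {})"
    unfolding sparse_supports_def by (auto simp: atLeast0LessThan)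
  consider "r = 0" "r \<noteq> 2" | "r \<noteq> 0" "r = 2" | "r \<noteq> 0" "r \<noteq> 2" by force
  then show ?thesis
  proof cases
    case 1
    show ?thesis unfolding sparse language_supports_def if_P[OF 1(1)] if_not_P[OF 1(2)]
      unfolding image_Un image_insert image_empty singletons rev_pairs by auto
  next
    case 2
    show ?thesis unfolding sparse language_supports_def if_not_P[OF 2(1)] if_P[OF 2(2)]
      unfolding image_Un image_insert image_empty singletons rev_pairs by auto
  next
    case 3
    show ?thesis unfolding sparse language_supports_def if_not_P[OF 3(1)] if_not_P[OF 3(2)]
      unfolding image_Un image_insert image_empty singletons rev_pairs by auto
  qed
qed

lemma Lang0_length:
  assumes "n \<ge> 3"
  shows "{w \<in> Lang0. length w = n} =
    {alternating_word n False} \<union> indicator_word n ` language_supports n 0"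
proof -
  have "{w \<in> Lang0. length w = n} = {w \<in> L_0s. length w = n} \<union> {w \<in> L_01s \<union> L_01s0. length w = n}
      \<union> {w \<in> L_0s10s. length w = n} \<union> {w \<in> L_0s011. length w = n} \<union> {w \<in> L_0s101. length w = n}"
    unfolding Lang0_def by blast
  then show ?thesis
    unfolding language_supports_def L_0s_length L_01s_L_01s0_length L_0s10s_length
      L_0s011_length[OF assms] L_0s101_length[OF assms] by auto
qed

lemma Lang1_length:
  assumes "n \<ge> 3"
  shows "{w \<in> Lang1. length w = n} =
    {alternating_word n False} \<union> indicator_word n ` language_supports n 1"
proof -
  have "{w \<in> Lang1. length w = n} = {w \<in> Lang0. length w = n} \<union> {w \<in> L_10s1. length w = n}"
    unfolding Lang1_def by blast
  moreover have "n \<ge> 2" using assms by simp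
  ultimately show ?thesis
    using assms unfolding Lang0_length[OF assms] L_10s1_length[OF \<open>n \<ge> 2\<close>]
      language_supports_def by auto
qed

lemma Lang2_length:
  assumes "n \<ge> 3"
  shows "{w \<in> Lang2. length w = n} =
    {alternating_word n False} \<union> indicator_word n ` language_supports n 2"
proof -
  have "{w \<in> Lang2. length w = n} =
      {w \<in> Lang1. length w = n} \<union> {w \<in> L_10s10. length w = n} \<union> {w \<in> L_10s11. length w = n}"
    unfolding Lang2_def by blast
  then show ?thesis
    using assms unfolding Lang1_length[OF assms] L_10s10_length[OF assms] L_10s11_length[OF assms]
      language_supports_def by auto
qed

lemma Cl_eq_A:
  assumes "n \<ge> 12"
    and L: "{w \<in> L. length w = n} =
      {alternating_word n False} \<union> indicator_word n ` language_supports n (n mod 3)"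
  shows "Cl n L = A n"
proof -
  have "Cl n L = set (A_list n)"
  proof (rule Cl_eq_A_list[OF L])
    show "set P \<subseteq> {..<n}" if "P \<in> language_supports n (n mod 3)" for P
      using language_supports_bounded[OF _ that] assms(1) by simp
    show "language_supports n (n mod 3) \<union> rev_support n ` language_supports n (n mod 3)
        = set (sparse_supports n (n mod 3))"
      using language_supports_rev_support assms(1) by simp
  qed
  with assms(1) show ?thesis by (simp add: A_eq_A_list)
qed

theorem corollary5:
  fixes k :: nat
  assumes "k \<ge> 6"
  shows "A (3*k) = Cl (3*k) Lang0 \<and>
         A (3*k+1) = Cl (3*k+1) Lang1 \<and>
         A (3*k+2) = Cl (3*k+2) Lang2 \<and>
         card (A (3*k)) = 6*k+12 \<and>
         card (A (3*k+1)) = 6*k+16 \<and>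
         card (A (3*k+2)) = 6*k+26"
proof -
  have n: "3 * k \<ge> 12" "3 * k \<ge> 3" using assms by simp_all
  have r: "(3*k) mod 3 = 0" "(3*k+1) mod 3 = 1" "(3*k+2) mod 3 = 2" by presburger+
  have "A (3*k) = Cl (3*k) Lang0"
    using Cl_eq_A[of "3*k" Lang0] Lang0_length[of "3*k"] n r by simp
  moreover have "A (3*k+1) = Cl (3*k+1) Lang1"
    using Cl_eq_A[of "3*k+1" Lang1] Lang1_length[of "3*k+1"] n r by simp
  moreover have "A (3*k+2) = Cl (3*k+2) Lang2"
    using Cl_eq_A[of "3*k+2" Lang2] Lang2_length[of "3*k+2"] n r by simp
  moreover have "card (A (3*k)) = 6*k+12" "card (A (3*k+1)) = 6*k+16" "card (A (3*k+2)) = 6*k+26"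
    using card_A_list A_eq_A_list n r by simp_all
  ultimately show ?thesis by simp
qed

end
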